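(* Assume the standing assumptions and, in addition, that $f$ is $\rho$-strongly convex for some $\rho>0$. Suppose $(D)$ has an optimal solution $p^*$ (a minimizer of $\theta$) with $\|p^*\|\le R$, $R>0$. Let $\kappa>0$ and let $(p_k)_{k\ge0}$ be generated by the fast gradient method applied to $\theta_\kappa$. Then for all $k\ge0$, $$\theta(p_k)-\theta(p^* )\le\frac\kappa2R^2+\frac{25}{8}\bigl(\theta(0)-\theta(p^* )\bigr)e^{-\frac k2\sqrt{\kappa/L(\kappa)}},$$ $$\|\nabla\theta(p_k)\|\le 2\sqrt{L(\kappa)\bigl(\theta(0)-\theta(p^* )\bigr)}\,e^{-\frac k2\sqrt{\kappa/L(\kappa)}}+2\kappa R .$$
   Context: Standing assumptions: $\mathcal{H}$ is a real Hilbert space; $f:\mathcal{H}\to\mathbb{R}\cup\{+\infty\}$ is proper, convex, lower semicontinuous with bounded effective domain; $g:\mathbb{R}^m\to\mathbb{R}\cup\{+\infty\}$ is proper, lower semicontinuous and $\mu$-strongly convex for some $\mu>0$; $A:\mathcal{H}\to\mathbb{R}^m$ is linear and continuous with $A(\operatorname{dom} f)\cap\operatorname{dom} g\neq\emptyset$. $(D)$ is $\sup_p\{-f^*(A^*p)-g^*(-p)\}$. $\theta(p):=f^*(A^*p)+g^*(-p)$ (differentiable here). $\theta_\kappa(p):=\theta(p)+\frac\kappa2\|p\|^2$, and $L(\kappa):=\frac{\|A\|^2}{\rho}+\frac1\mu+\kappa$ (a Lipschitz constant of $\nabla\theta_\kappa$). Fast gradient method on $\theta_\kappa$: $w_0=p_0=0$,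 $p_{k+1}=w_k-\frac{1}{L(\kappa)}\nabla\theta_\kappa(w_k)$, $w_{k+1}=p_{k+1}+\frac{\sqrt{L(\kappa)}-\sqrt\kappa}{\sqrt{L(\kappa)}+\sqrt\kappa}(p_{k+1}-p_k)$. *)

theory Defs
  imports "HOL-Analysis.Analysis"
begin

text \<open>Extended-real-valued functions \<open>'a \<Rightarrow> ereal\<close> model \<open>\<real> \<union> {+\<infinity>}\<close>; properness excludes \<open>-\<infinity>\<close>.\<close>

definition proper_fun :: "('a \<Rightarrow> ereal) \<Rightarrow> bool" where
  "proper_fun f \<longleftrightarrow> (\<forall>x. f x \<noteq> -\<infinity>) \<and> (\<exists>x. f x \<noteq> \<infinity>)"

definition edom :: "('a \<Rightarrow> ereal) \<Rightarrow> 'a set" where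
  "edom f = {x. f x \<noteq> \<infinity>}"

definition convex_fun :: "('a::real_vector \<Rightarrow> ereal) \<Rightarrow> bool" where
  "convex_fun f \<longleftrightarrow> (\<forall>x y t. 0 < t \<and> t < 1 \<longrightarrow>
      f (t *\<^sub>R x + (1 - t) *\<^sub>R y) \<le> ereal t * f x + ereal (1 - t) * f y)"

definition strongly_convex_fun :: "real \<Rightarrow> ('a::real_normed_vector \<Rightarrow> ereal) \<Rightarrow> bool" where
  "strongly_convex_fun c f \<longleftrightarrow> (\<forall>x y t. 0 < t \<and> t < 1 \<longrightarrow>
      f (t *\<^sub>R x + (1 - t) *\<^sub>R y) \<le> ereal t * f x + ereal (1 - t) * f y
        - ereal (c / 2 * t * (1 - t) * (norm (x - y))\<^sup>2))"

definition lsc_fun :: "('a::topological_space \<Rightarrow> ereal) \<Rightarrow> bool" where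
  "lsc_fun f \<longleftrightarrow> (\<forall>c. closed {x. f x \<le> c})"

definition fconj :: "('a::real_inner \<Rightarrow> ereal) \<Rightarrow> 'a \<Rightarrow> ereal" where
  "fconj f y = (SUP x. ereal (inner y x) - f x)"

definition grad :: "('a::real_inner \<Rightarrow> real) \<Rightarrow> 'a \<Rightarrow> 'a" where
  "grad F p = (SOME v. (F has_derivative (\<lambda>h. inner v h)) (at p))"

text \<open>Fast gradient method: returns the pair \<open>(p_k, w_k)\<close> for the gradient map \<open>G\<close>,
  step constant \<open>L\<close> and strong-convexity parameter \<open>\<kappa>\<close>.\<close>
fun fgm :: "('b::real_vector \<Rightarrow> 'b) \<Rightarrow> real \<Rightarrow> real \<Rightarrow> nat \<Rightarrow> 'b \<times> 'b" where
  "fgm G L \<kappa> 0 = (0, 0)"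
| "fgm G L \<kappa> (Suc k) =
     (let p = fst (fgm G L \<kappa> k); w = snd (fgm G L \<kappa> k);
          p' = w - (1 / L) *\<^sub>R G w
      in (p', p' + ((sqrt L - sqrt \<kappa>) / (sqrt L + sqrt \<kappa>)) *\<^sub>R (p' - p)))"

end

theory Submission
  imports Defs
begin

text \<open>
  The dual function \<open>\<theta> p = f\<^sup>*(A\<^sup>* p) + g\<^sup>*(-p)\<close> is convex and smooth with constant
  \<open>M = \<parallel>A\<parallel>\<^sup>2/\<rho> + 1/\<mu>\<close>, because the Fenchel conjugate of a \<open>c\<close>-strongly convex, proper, lower
  semicontinuous function on a Hilbert space is finite, convex and \<open>1/c\<close>-smooth, its gradient being
  the (attained) maximiser of \<open>z \<mapsto> \<langle>y, z\<rangle> - h z\<close>.  The regularisation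
  \<open>\<theta>\<^sub>\<kappa> = \<theta> + \<kappa>/2 \<parallel>\<cdot>\<parallel>\<^sup>2\<close> is then \<open>\<kappa>\<close>-strongly convex and \<open>(M + \<kappa>)\<close>-smooth, so the fast gradient
  method contracts a Lyapunov potential by \<open>1 - \<surd>(\<kappa>/L(\<kappa>))\<close> per step.  Comparing with \<open>p\<^sup>*\<close>
  gives the value bound; comparing with the minimiser \<open>y\<close> of \<open>\<theta>\<^sub>\<kappa>\<close> (where \<open>\<nabla>\<theta> y = -\<kappa> y\<close>,
  \<open>\<parallel>y\<parallel> \<le> \<parallel>p\<^sup>*\<parallel>\<close>) and using co-coercivity of \<open>\<nabla>\<theta>\<close> gives the gradient bound.
\<close>

text \<open>A real number bounded by arbitrarily small positive multiples of a constant is nonpositive;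
  this is how first-order optimality conditions are extracted from one-sided perturbations.\<close>
lemma nonpos_if_le_linear:
  fixes a K :: real
  assumes "\<And>t. 0 < t \<Longrightarrow> t < 1 \<Longrightarrow> a \<le> K * t"
  shows "a \<le> 0"
proof (rule field_le_epsilon)
  fix e :: real assume e: "e > 0"
  define t where "t = min (1/2) (e / (\<bar>K\<bar> + 1))"
  have t: "0 < t" "t < 1" using e by (auto simp: t_def)
  have "K * t \<le> (\<bar>K\<bar> + 1) * t" using t by (intro mult_right_mono) auto
  also have "\<dots> \<le> (\<bar>K\<bar> + 1) * (e / (\<bar>K\<bar> + 1))"
    by (intro mult_left_mono) (auto simp: t_def)
  finally show "a \<le> 0 + e" using assms[OF t] by simp
qed

lemma norm_diff_scaleR_sq:
  fixes a b :: "'a::real_inner"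
  shows "(norm (a - t *\<^sub>R b))\<^sup>2 = (norm a)\<^sup>2 - 2 * t * inner a b + t\<^sup>2 * (norm b)\<^sup>2"
  unfolding power2_norm_eq_inner
  by (simp add: inner_diff_left inner_diff_right inner_commute algebra_simps power2_eq_square)

lemma inner_minus_quadratic_le:
  fixes v w :: "'a::real_inner"
  assumes c: "c > 0"
  shows "inner v w - c / 2 * (norm w)\<^sup>2 \<le> (norm v)\<^sup>2 / (2 * c)"
proof -
  have "0 \<le> (norm (v - c *\<^sub>R w))\<^sup>2" by simp
  also have "\<dots> = (norm v)\<^sup>2 - 2 * c * inner v w + c\<^sup>2 * (norm w)\<^sup>2" by (rule norm_diff_scaleR_sq)
  finally have "2 * c * (inner v w - c / 2 * (norm w)\<^sup>2) \<le> (norm v)\<^sup>2"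
    by (simp add: algebra_simps power2_eq_square)
  thus ?thesis using c by (simp add: field_simps)
qed

lemma Cauchy_if_sq_dist_le:
  fixes z :: "nat \<Rightarrow> 'a::real_normed_vector" and e :: "nat \<Rightarrow> real"
  assumes dist: "\<And>n m. (norm (z n - z m))\<^sup>2 \<le> K * (e n + e m)"
    and K: "K \<ge> 0" and e: "e \<longlonglongrightarrow> 0"
  shows "Cauchy z"
proof (rule metric_CauchyI)
  fix \<epsilon> :: real assume \<epsilon>: "\<epsilon> > 0"
  define \<delta> where "\<delta> = \<epsilon>\<^sup>2 / (4 * (K + 1))"
  have \<delta>: "\<delta> > 0" using \<epsilon> K by (simp add: \<delta>_def)
  obtain N where N: "\<And>n. n \<ge> N \<Longrightarrow> \<bar>e n\<bar> < \<delta>"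
    using LIMSEQ_D[OF e \<delta>] by auto
  have "dist (z m) (z n) < \<epsilon>" if "m \<ge> N" "n \<ge> N" for m n
  proof -
    have "(norm (z m - z n))\<^sup>2 \<le> K * (e m + e n)" by (rule dist)
    also have "\<dots> \<le> K * (2 * \<delta>)"
      using N[OF that(1)] N[OF that(2)] K by (intro mult_left_mono) auto
    also have "\<dots> \<le> (K + 1) * (2 * \<delta>)" using \<delta> by simp
    also have "\<dots> = \<epsilon>\<^sup>2 / 2" using K by (simp add: \<delta>_def field_simps)
    also have "\<dots> < \<epsilon>\<^sup>2" using \<epsilon> by simp
    finally show ?thesis using \<epsilon> by (simp add: dist_norm power_less_imp_less_base)
  qed
  thus "\<exists>M. \<forall>m\<ge>M. \<forall>n\<ge>M. dist (z m) (z n) < \<epsilon>" by blast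
qed

lemma closed_sublevels_limit:
  fixes H :: "'a::topological_space \<Rightarrow> real"
  assumes lsc: "\<And>r. closed {x \<in> D. H x \<le> r}" and zD: "\<And>n. z n \<in> D" and lim: "z \<longlonglongrightarrow> x"
    and ev: "\<And>\<epsilon>. \<epsilon> > 0 \<Longrightarrow> eventually (\<lambda>n. H (z n) \<le> l + \<epsilon>) sequentially"
  shows "x \<in> D \<and> H x \<le> l"
proof -
  have x: "x \<in> D \<and> H x \<le> l + \<epsilon>" if "\<epsilon> > 0" for \<epsilon>
  proof -
    have "eventually (\<lambda>n. z n \<in> {x \<in> D. H x \<le> l + \<epsilon>}) sequentially"
      using ev[OF that] zD by (auto elim: eventually_mono)
    from Lim_in_closed_set[OF lsc this _ lim] show ?thesis by simp
  qed
  then show ?thesis using x[of 1] by (auto intro: field_le_epsilon)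
qed

text \<open>Near-maximisers of \<open>z \<mapsto> \<langle>y, z\<rangle> - H z\<close> are close to each other when \<open>H\<close> is strongly
  convex along midpoints: their midpoint would otherwise exceed the supremum \<open>s\<close>.\<close>
lemma near_maximisers_close:
  fixes D :: "'a::real_inner set" and H :: "'a \<Rightarrow> real"
  assumes mid: "\<And>x y. x \<in> D \<Longrightarrow> y \<in> D \<Longrightarrow> (1/2) *\<^sub>R (x + y) \<in> D \<and>
          H ((1/2) *\<^sub>R (x + y)) \<le> (H x + H y) / 2 - c / 8 * (norm (x - y))\<^sup>2"
    and c: "c > 0" and ub: "\<And>z. z \<in> D \<Longrightarrow> inner y z - H z \<le> s"
    and x1: "x1 \<in> D" "s - e1 < inner y x1 - H x1" and x2: "x2 \<in> D" "s - e2 < inner y x2 - H x2"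
  shows "(norm (x1 - x2))\<^sup>2 \<le> 4 / c * (e1 + e2)"
proof -
  define P where "P = (1/2) *\<^sub>R (x1 + x2)"
  have PD: "P \<in> D" and HP: "H P \<le> (H x1 + H x2) / 2 - c / 8 * (norm (x1 - x2))\<^sup>2"
    using mid[OF x1(1) x2(1)] by (auto simp: P_def)
  have "inner y P = (inner y x1 + inner y x2) / 2" by (simp add: inner_add_right P_def)
  then have "c / 8 * (norm (x1 - x2))\<^sup>2 \<le> (e1 + e2) / 2"
    using ub[OF PD] HP x1(2) x2(2) by argo
  then show ?thesis using c by (simp add: field_simps)
qed

text \<open>Existence of a maximiser of \<open>z \<mapsto> \<langle>y, z\<rangle> - H z\<close> over \<open>D\<close> in a Hilbert space, when \<open>H\<close> has
  closed sublevel sets and is strongly convex along midpoints: a maximising sequence is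
  Cauchy by the midpoint inequality, and its limit is a maximiser by lower semicontinuity.\<close>
lemma strongly_concave_max_exists:
  fixes D :: "'a::{real_inner, complete_space} set" and H :: "'a \<Rightarrow> real"
  assumes ne: "D \<noteq> {}" and c: "c > 0"
    and mid: "\<And>x y. x \<in> D \<Longrightarrow> y \<in> D \<Longrightarrow> (1/2) *\<^sub>R (x + y) \<in> D \<and>
          H ((1/2) *\<^sub>R (x + y)) \<le> (H x + H y) / 2 - c / 8 * (norm (x - y))\<^sup>2"
    and lsc: "\<And>r. closed {x \<in> D. H x \<le> r}"
    and bdd: "\<And>z. z \<in> D \<Longrightarrow> inner y z - H z \<le> B"
  shows "\<exists>x\<in>D. \<forall>z\<in>D. inner y z - H z \<le> inner y x - H x"
proof -
  define \<psi> where "\<psi> z = inner y z - H z" for z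
  define s where "s = Sup (\<psi> ` D)"
  have bddA: "bdd_above (\<psi> ` D)" using bdd by (auto simp: \<psi>_def bdd_above_def)
  have ub: "\<psi> z \<le> s" if "z \<in> D" for z using that bddA by (simp add: s_def cSup_upper)
  have "\<exists>z\<in>D. s - inverse (real (Suc n)) < \<psi> z" for n
  proof -
    have "s - inverse (real (Suc n)) < s" by simp
    then show ?thesis unfolding s_def using ne by (subst (asm) less_cSup_iff) (auto simp: bddA)
  qed
  then obtain z where zD: "\<And>n. z n \<in> D" and zs: "\<And>n. s - inverse (real (Suc n)) < \<psi> (z n)"
    by metis
  have "(norm (z n - z m))\<^sup>2 \<le> 4 / c * (inverse (real (Suc n)) + inverse (real (Suc m)))" for n m
    using near_maximisers_close[OF mid c ub[unfolded \<psi>_def] zD zs[unfolded \<psi>_def] zD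
        zs[unfolded \<psi>_def]] .
  then have "Cauchy z"
    using c LIMSEQ_inverse_real_of_nat
    by (intro Cauchy_if_sq_dist_le[where K = "4 / c" and e = "\<lambda>n. inverse (real (Suc n))"]) auto
  then obtain x where zx: "z \<longlonglongrightarrow> x" using Cauchy_convergent_iff convergent_def by blast
  have "x \<in> D \<and> H x \<le> inner y x - s"
  proof (rule closed_sublevels_limit[OF lsc zD zx])
    fix \<epsilon> :: real assume \<epsilon>: "\<epsilon> > 0"
    have "(\<lambda>n. inner y (z n) - s + inverse (real (Suc n))) \<longlonglongrightarrow> inner y x - s + 0"
      by (intro tendsto_intros zx LIMSEQ_inverse_real_of_nat)
    then have "eventually (\<lambda>n. inner y (z n) - s + inverse (real (Suc n)) < inner y x - s + \<epsilon>) sequentially"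
      using \<epsilon> by (intro order_tendstoD(2)) auto
    then show "eventually (\<lambda>n. H (z n) \<le> inner y x - s + \<epsilon>) sequentially"
    proof eventually_elim
      case (elim n) with zs[of n] show ?case by (simp add: \<psi>_def)
    qed
  qed
  then show ?thesis using ub unfolding \<psi>_def by force
qed

text \<open>The parallelogram law, centred at a midpoint: \<open>\<parallel>\<cdot>\<parallel>\<^sup>2\<close> is \<open>2\<close>-strongly convex.\<close>
lemma parallelogram_midpoint:
  fixes P x y :: "'a::real_inner"
  shows "(norm (P - (1/2) *\<^sub>R (x + y)))\<^sup>2
    = ((norm (P - x))\<^sup>2 + (norm (P - y))\<^sup>2) / 2 - 2 / 8 * (norm (x - y))\<^sup>2"
  unfolding power2_norm_eq_inner
  by (simp add: inner_diff_left inner_diff_right inner_add_left inner_add_right inner_commute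
      algebra_simps) (simp add: field_simps)

lemma hilbert_projection:
  fixes S :: "'a::{real_inner, complete_space} set"
  assumes cl: "closed S" and cv: "convex S" and ne: "S \<noteq> {}"
  shows "\<exists>q\<in>S. \<forall>s\<in>S. inner (P - q) (s - q) \<le> 0"
proof -
  have "\<exists>q\<in>S. \<forall>z\<in>S. inner 0 z - (norm (P - z))\<^sup>2 \<le> inner 0 q - (norm (P - q))\<^sup>2"
  proof (rule strongly_concave_max_exists[where c = 2 and B = 0])
    fix x y assume xy: "x \<in> S" "y \<in> S"
    have "(1/2) *\<^sub>R (x + y) = (1/2) *\<^sub>R x + (1/2) *\<^sub>R y" by (simp add: scaleR_right_distrib)
    also have "\<dots> \<in> S" by (rule convexD[OF cv xy]) auto
    finally have m: "(1/2) *\<^sub>R (x + y) \<in> S" .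
    with m parallelogram_midpoint[of P x y] show "(1/2) *\<^sub>R (x + y) \<in> S \<and> (norm (P - (1/2) *\<^sub>R (x + y)))\<^sup>2
        \<le> ((norm (P - x))\<^sup>2 + (norm (P - y))\<^sup>2) / 2 - 2 / 8 * (norm (x - y))\<^sup>2"
      by simp
  next
    fix r
    have "{x \<in> S. (norm (P - x))\<^sup>2 \<le> r} = S \<inter> {x. (norm (P - x))\<^sup>2 \<le> r}" by auto
    also have "closed \<dots>" using cl by (intro closed_Int closed_Collect_le continuous_intros) auto
    finally show "closed {x \<in> S. (norm (P - x))\<^sup>2 \<le> r}" .
  qed (use ne in auto)
  then obtain q where qS: "q \<in> S" and qmin: "\<And>z. z \<in> S \<Longrightarrow> (norm (P - q))\<^sup>2 \<le> (norm (P - z))\<^sup>2"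
    by auto
  have "inner (P - q) (s - q) \<le> 0" if sS: "s \<in> S" for s
  proof (rule nonpos_if_le_linear[where K = "(norm (s - q))\<^sup>2 / 2"])
    fix t :: real assume t: "0 < t" "t < 1"
    have "q + t *\<^sub>R (s - q) = (1 - t) *\<^sub>R q + t *\<^sub>R s" by (simp add: algebra_simps)
    also have "\<dots> \<in> S" using cv qS sS t unfolding convex_def by auto
    finally have "(norm (P - q))\<^sup>2 \<le> (norm ((P - q) - t *\<^sub>R (s - q)))\<^sup>2"
      using qmin by (metis diff_diff_eq)
    also have "\<dots> = (norm (P - q))\<^sup>2 - 2 * t * inner (P - q) (s - q) + t\<^sup>2 * (norm (s - q))\<^sup>2"
      by (rule norm_diff_scaleR_sq)
    finally have "t * (2 * inner (P - q) (s - q)) \<le> t * (t * (norm (s - q))\<^sup>2)"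
      by (simp add: power2_eq_square algebra_simps)
    then show "inner (P - q) (s - q) \<le> (norm (s - q))\<^sup>2 / 2 * t"
      using t by (simp add: field_simps)
  qed
  with qS show ?thesis by blast
qed

locale sc_lsc =
  fixes h :: "'a::{real_inner, complete_space} \<Rightarrow> ereal" and c :: real
  assumes proper: "proper_fun h" and lsc: "lsc_fun h"
    and strongly_convex: "strongly_convex_fun c h" and c_pos: "c > 0"
begin

definition hval :: "'a \<Rightarrow> real" where "hval x = real_of_ereal (h x)"

lemma h_hval: "x \<in> edom h \<Longrightarrow> h x = ereal (hval x)"
  using proper unfolding proper_fun_def edom_def hval_def by (cases "h x") auto

lemma edom_nonempty: "edom h \<noteq> {}"
  using proper by (auto simp: proper_fun_def edom_def)

lemma convex_combination:
  assumes "x \<in> edom h" "y \<in> edom h" "0 < t" "t < 1"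
  shows "t *\<^sub>R x + (1 - t) *\<^sub>R y \<in> edom h \<and>
    hval (t *\<^sub>R x + (1 - t) *\<^sub>R y) \<le> t * hval x + (1 - t) * hval y - c / 2 * t * (1 - t) * (norm (x - y))\<^sup>2"
proof -
  have "h (t *\<^sub>R x + (1 - t) *\<^sub>R y)
      \<le> ereal t * h x + ereal (1 - t) * h y - ereal (c / 2 * t * (1 - t) * (norm (x - y))\<^sup>2)"
    using strongly_convex assms(3,4) unfolding strongly_convex_fun_def by blast
  then have le: "h (t *\<^sub>R x + (1 - t) *\<^sub>R y)
      \<le> ereal (t * hval x + (1 - t) * hval y - c / 2 * t * (1 - t) * (norm (x - y))\<^sup>2)"
    by (simp add: h_hval assms(1,2))
  then have inD: "t *\<^sub>R x + (1 - t) *\<^sub>R y \<in> edom h" by (auto simp: edom_def)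
  with le h_hval[OF inD] show ?thesis by simp
qed

lemma midpoint:
  assumes "x \<in> edom h" "y \<in> edom h"
  shows "(1/2) *\<^sub>R (x + y) \<in> edom h \<and>
    hval ((1/2) *\<^sub>R (x + y)) \<le> (hval x + hval y) / 2 - c / 8 * (norm (x - y))\<^sup>2"
proof -
  have "(1/2) *\<^sub>R (x + y) = (1/2) *\<^sub>R x + (1 - 1/2) *\<^sub>R y" by (simp add: scaleR_right_distrib)
  then show ?thesis using convex_combination[OF assms, of "1/2"] by (simp add: field_simps)
qed

lemma closed_sublevel: "closed {x \<in> edom h. hval x \<le> r}"
proof -
  have "{x \<in> edom h. hval x \<le> r} = {x. h x \<le> ereal r}"
  proof safe
    fix x assume a: "h x \<le> ereal r"
    then show x: "x \<in> edom h" by (auto simp: edom_def)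
    show "hval x \<le> r" using a h_hval[OF x] by simp
  qed (simp add: h_hval)
  then show ?thesis using lsc by (simp add: lsc_fun_def)
qed

definition epigraph :: "('a \<times> real) set" where
  "epigraph = {(x, t). x \<in> edom h \<and> hval x \<le> t}"

lemma convex_epigraph: "convex epigraph"
proof (rule convexI)
  fix p1 p2 :: "'a \<times> real" and u v :: real
  assume p: "p1 \<in> epigraph" "p2 \<in> epigraph" and uv: "0 \<le> u" "0 \<le> v" "u + v = 1"
  obtain x1 s1 x2 s2 where pp: "p1 = (x1, s1)" "p2 = (x2, s2)" by fastforce
  have x: "x1 \<in> edom h" "x2 \<in> edom h" and s: "hval x1 \<le> s1" "hval x2 \<le> s2"
    using p by (auto simp: pp epigraph_def)
  show "u *\<^sub>R p1 + v *\<^sub>R p2 \<in> epigraph"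
  proof (cases "u = 0 \<or> v = 0")
    case True then show ?thesis using uv p by auto
  next
    case False
    then have u: "0 < u" "u < 1" and v: "v = 1 - u" using uv by auto
    have "0 \<le> c / 2 * u * (1 - u) * (norm (x1 - x2))\<^sup>2" using c_pos u by simp
    then have inD: "u *\<^sub>R x1 + v *\<^sub>R x2 \<in> edom h"
      and "hval (u *\<^sub>R x1 + v *\<^sub>R x2) \<le> u * hval x1 + v * hval x2"
      using convex_combination[OF x u] unfolding v by linarith+
    moreover have "u * hval x1 + v * hval x2 \<le> u * s1 + v * s2"
      using s uv by (intro add_mono mult_left_mono) auto
    ultimately show ?thesis by (simp add: pp epigraph_def)
  qed
qed

lemma closed_epigraph: "closed epigraph"
proof (rule closed_sequential_limits[THEN iffD2], intro allI impI, elim conjE)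
  fix seq :: "nat \<Rightarrow> 'a \<times> real" and l
  assume inE: "\<forall>n. seq n \<in> epigraph" and lim: "seq \<longlonglongrightarrow> l"
  obtain x s where l: "l = (x, s)" by fastforce
  have "(\<lambda>n. snd (seq n)) \<longlonglongrightarrow> s" using tendsto_snd[OF lim] by (simp add: l)
  have "x \<in> edom h \<and> hval x \<le> s"
  proof (rule closed_sublevels_limit[OF closed_sublevel])
    show "fst (seq n) \<in> edom h" for n
      using inE[rule_format, of n] by (cases "seq n") (auto simp: epigraph_def)
    show "(\<lambda>n. fst (seq n)) \<longlonglongrightarrow> x" using tendsto_fst[OF lim] by (simp add: l)
    fix \<epsilon> :: real assume "\<epsilon> > 0"
    then have "eventually (\<lambda>n. snd (seq n) < s + \<epsilon>) sequentially"
      using \<open>(\<lambda>n. snd (seq n)) \<longlonglongrightarrow> s\<close> by (intro order_tendstoD(2)) auto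
    then show "eventually (\<lambda>n. hval (fst (seq n)) \<le> s + \<epsilon>) sequentially"
    proof eventually_elim
      case (elim n) with inE[rule_format, of n] show ?case by (cases "seq n") (auto simp: epigraph_def)
    qed
  qed
  then show "l \<in> epigraph" by (simp add: l epigraph_def)
qed

text \<open>A closed convex function has an affine minorant: project a point strictly below the
  epigraph onto it; the projection direction is non-vertical and gives a supporting hyperplane.\<close>
lemma affine_minorant: "\<exists>a \<alpha>. \<forall>x\<in>edom h. \<alpha> + inner a x \<le> hval x"
proof -
  obtain x0 where x0: "x0 \<in> edom h" using edom_nonempty by blast
  have "(x0, hval x0) \<in> epigraph" using x0 by (simp add: epigraph_def)
  then obtain xq tq where Q: "(xq, tq) \<in> epigraph"
    and Qp: "\<And>e. e \<in> epigraph \<Longrightarrow> inner ((x0, hval x0 - 1) - (xq, tq)) (e - (xq, tq)) \<le> 0"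
    using hilbert_projection[OF closed_epigraph convex_epigraph, of "(x0, hval x0 - 1)"] by fast
  define aa where "aa = x0 - xq"
  define bb where "bb = hval x0 - 1 - tq"
  have ineq: "inner aa (x - xq) + bb * (s - tq) \<le> 0" if "x \<in> edom h" "hval x \<le> s" for x s
    using Qp[of "(x, s)"] that by (simp add: aa_def bb_def inner_real_def epigraph_def)
  have xq: "xq \<in> edom h" "hval xq \<le> tq" using Q by (auto simp: epigraph_def)
  have "bb \<le> 0" using ineq[OF xq(1), of "tq + 1"] xq by simp
  moreover have "bb \<noteq> 0"
  proof
    assume b0: "bb = 0"
    then have "inner aa aa \<le> 0" using ineq[OF x0 order_refl] by (simp add: aa_def)
    then have "aa = 0" by (metis inner_gt_zero_iff not_le)
    then have "x0 = xq" by (simp add: aa_def)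
    with xq b0 show False by (simp add: bb_def)
  qed
  ultimately have bneg: "bb < 0" by simp
  have "(tq + inner aa xq / bb) + inner ((- 1 / bb) *\<^sub>R aa) x \<le> hval x" if x: "x \<in> edom h" for x
  proof -
    have "bb * hval x \<le> bb * ((tq + inner aa xq / bb) + inner ((- 1 / bb) *\<^sub>R aa) x)"
      using ineq[OF x order_refl] bneg by (simp add: inner_diff_right algebra_simps)
    then show ?thesis using bneg by (simp add: mult_le_cancel_left_neg)
  qed
  then show ?thesis by blast
qed

text \<open>The objective \<open>z \<mapsto> \<langle>y, z\<rangle> - h z\<close> of the conjugate is bounded above: the affine minorant
  at the midpoint with a fixed point of the domain yields quadratic growth of \<open>h\<close>.\<close>
lemma conjugate_objective_bounded: "\<exists>B. \<forall>z\<in>edom h. inner y z - hval z \<le> B"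
proof -
  obtain a \<alpha> where aff: "\<And>x. x \<in> edom h \<Longrightarrow> \<alpha> + inner a x \<le> hval x"
    using affine_minorant by blast
  obtain x0 where x0: "x0 \<in> edom h" using edom_nonempty by blast
  have "inner y z - hval z
      \<le> inner (y - a) x0 + (norm (y - a))\<^sup>2 / c + hval x0 - 2 * \<alpha> - inner a x0" if z: "z \<in> edom h" for z
  proof -
    have "\<alpha> + inner a ((1/2) *\<^sub>R (z + x0)) \<le> hval ((1/2) *\<^sub>R (z + x0))"
      using aff midpoint[OF z x0] by blast
    then have Hz: "2 * \<alpha> + inner a z + inner a x0 - hval x0 + c / 4 * (norm (z - x0))\<^sup>2 \<le> hval z"
      using midpoint[OF z x0] by (simp add: inner_add_right field_simps)
    have "inner (y - a) (z - x0) - (c / 2) / 2 * (norm (z - x0))\<^sup>2 \<le> (norm (y - a))\<^sup>2 / (2 * (c / 2))"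
      using c_pos by (intro inner_minus_quadratic_le) simp
    with Hz show ?thesis by (simp add: inner_diff_left inner_diff_right)
  qed
  then show ?thesis by blast
qed

definition argmax :: "'a \<Rightarrow> 'a" where
  "argmax y = (SOME x. x \<in> edom h \<and> (\<forall>z\<in>edom h. inner y z - hval z \<le> inner y x - hval x))"

lemma
  shows argmax_in_edom: "argmax y \<in> edom h"
    and argmax_max: "z \<in> edom h \<Longrightarrow> inner y z - hval z \<le> inner y (argmax y) - hval (argmax y)"
proof -
  obtain B where "\<And>z. z \<in> edom h \<Longrightarrow> inner y z - hval z \<le> B"
    using conjugate_objective_bounded by blast
  then have "\<exists>x\<in>edom h. \<forall>z\<in>edom h. inner y z - hval z \<le> inner y x - hval x"
    using strongly_concave_max_exists[OF edom_nonempty c_pos midpoint closed_sublevel] by blast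
  then obtain x where "x \<in> edom h \<and> (\<forall>z\<in>edom h. inner y z - hval z \<le> inner y x - hval x)"
    by blast
  then have "argmax y \<in> edom h \<and> (\<forall>z\<in>edom h. inner y z - hval z \<le> inner y (argmax y) - hval (argmax y))"
    unfolding argmax_def by (rule someI)
  then show "argmax y \<in> edom h" "z \<in> edom h \<Longrightarrow> inner y z - hval z \<le> inner y (argmax y) - hval (argmax y)"
    by auto
qed

definition conj_val :: "'a \<Rightarrow> real" where
  "conj_val y = inner y (argmax y) - hval (argmax y)"

lemma fconj_eq: "fconj h y = ereal (conj_val y)"
  unfolding fconj_def
proof (rule antisym)
  show "(SUP x. ereal (inner y x) - h x) \<le> ereal (conj_val y)"
  proof (rule SUP_least)
    fix x show "ereal (inner y x) - h x \<le> ereal (conj_val y)"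
    proof (cases "x \<in> edom h")
      case True then show ?thesis using argmax_max[OF True, of y] by (simp add: h_hval conj_val_def)
    next
      case False then have "h x = \<infinity>" by (simp add: edom_def)
      then show ?thesis by simp
    qed
  qed
  show "ereal (conj_val y) \<le> (SUP x. ereal (inner y x) - h x)"
    by (rule SUP_upper2[of "argmax y"]) (auto simp: h_hval[OF argmax_in_edom] conj_val_def)
qed

text \<open>Strong concavity of the objective makes its value drop quadratically away from the maximiser.\<close>
lemma quadratic_growth:
  assumes z: "z \<in> edom h"
  shows "inner y z - hval z \<le> conj_val y - c / 2 * (norm (z - argmax y))\<^sup>2"
proof -
  let ?d = "c / 2 * (norm (z - argmax y))\<^sup>2"
  have "?d - (conj_val y - (inner y z - hval z)) \<le> 0"
  proof (rule nonpos_if_le_linear[where K = ?d])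
    fix t :: real assume t: "0 < t" "t < 1"
    let ?w = "t *\<^sub>R z + (1 - t) *\<^sub>R argmax y"
    have w: "?w \<in> edom h"
        "hval ?w \<le> t * hval z + (1 - t) * hval (argmax y) - c / 2 * t * (1 - t) * (norm (z - argmax y))\<^sup>2"
      using convex_combination[OF z argmax_in_edom t] by auto
    have "inner y ?w - hval ?w \<le> conj_val y" using argmax_max[OF w(1)] by (simp add: conj_val_def)
    moreover have "inner y ?w = t * inner y z + (1 - t) * inner y (argmax y)"
      by (simp add: inner_add_right)
    ultimately have "t * ((1 - t) * ?d) \<le> t * (conj_val y - (inner y z - hval z))"
      using w(2) by (simp add: conj_val_def algebra_simps)
    then have "(1 - t) * ?d \<le> conj_val y - (inner y z - hval z)" using t by simp
    moreover have "(1 - t) * ?d = ?d - ?d * t" by (simp only: left_diff_distrib mult_1 mult.commute[of t])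
    ultimately show "?d - (conj_val y - (inner y z - hval z)) \<le> ?d * t" by linarith
  qed
  then show ?thesis by simp
qed

lemma conj_lower: "conj_val y + inner (y' - y) (argmax y) \<le> conj_val y'"
  using argmax_max[OF argmax_in_edom, of y' y] by (simp add: conj_val_def inner_diff_left)

lemma conj_upper: "conj_val y' \<le> conj_val y + inner (y' - y) (argmax y) + (norm (y' - y))\<^sup>2 / (2 * c)"
proof -
  have "inner y (argmax y') - hval (argmax y')
      \<le> conj_val y - c / 2 * (norm (argmax y' - argmax y))\<^sup>2"
    by (rule quadratic_growth[OF argmax_in_edom])
  moreover have "inner (y' - y) (argmax y' - argmax y) - c / 2 * (norm (argmax y' - argmax y))\<^sup>2
      \<le> (norm (y' - y))\<^sup>2 / (2 * c)"
    by (rule inner_minus_quadratic_le[OF c_pos])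
  moreover have "conj_val y' = inner (y' - y) (argmax y) + inner (y' - y) (argmax y' - argmax y)
      + (inner y (argmax y') - hval (argmax y'))"
    by (simp add: conj_val_def inner_diff_left inner_diff_right)
  ultimately show ?thesis by linarith
qed

end

lemma half_sq_norm_expansion:
  fixes p q :: "'a::real_inner"
  shows "\<kappa> / 2 * (norm q)\<^sup>2 = \<kappa> / 2 * (norm p)\<^sup>2 + \<kappa> * inner p (q - p) + \<kappa> / 2 * (norm (q - p))\<^sup>2"
  unfolding power2_norm_eq_inner
  by (simp add: inner_diff_left inner_diff_right inner_commute algebra_simps)

lemma grad_of_quadratic_bounds:
  fixes F :: "'a::real_inner \<Rightarrow> real"
  assumes lo: "\<And>p q. F p + inner (G p) (q - p) \<le> F q"
    and up: "\<And>p q. F q \<le> F p + inner (G p) (q - p) + M / 2 * (norm (q - p))\<^sup>2"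
    and M: "M \<ge> 0"
  shows "(F has_derivative (\<lambda>h. inner (G p) h)) (at p)" and "grad F p = G p"
proof -
  show der: "(F has_derivative (\<lambda>h. inner (G p) h)) (at p)"
    unfolding has_derivative_at_alt
  proof (intro conjI allI impI)
    show "bounded_linear (\<lambda>h. inner (G p) h)" by (rule bounded_linear_inner_right)
    fix e :: real assume e: "e > 0"
    show "\<exists>d>0. \<forall>y. norm (y - p) < d \<longrightarrow> norm (F y - F p - inner (G p) (y - p)) \<le> e * norm (y - p)"
    proof (intro exI[of _ "2 * e / (M + 1)"] conjI allI impI)
      show "0 < 2 * e / (M + 1)" using e M by simp
      fix y assume y: "norm (y - p) < 2 * e / (M + 1)"
      have "0 \<le> F y - F p - inner (G p) (y - p)" using lo[where p = p and q = y] by simp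
      then have "norm (F y - F p - inner (G p) (y - p)) = F y - F p - inner (G p) (y - p)" by simp
      also have "\<dots> \<le> M / 2 * (norm (y - p))\<^sup>2" using up[where p = p and q = y] by simp
      also have "\<dots> \<le> (M + 1) / 2 * norm (y - p) * norm (y - p)"
        using mult_right_mono[of "M / 2" "(M + 1) / 2" "(norm (y - p))\<^sup>2"]
        by (simp add: power2_eq_square mult.assoc)
      also have "\<dots> \<le> (M + 1) / 2 * (2 * e / (M + 1)) * norm (y - p)"
        using y M by (intro mult_right_mono mult_left_mono) auto
      also have "\<dots> = e * norm (y - p)" using M by simp
      finally show "norm (F y - F p - inner (G p) (y - p)) \<le> e * norm (y - p)" .
    qed
  qed
  obtain v where v: "(F has_derivative (\<lambda>h. inner v h)) (at p)" and vdef: "grad F p = v"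
    using someI_ex[of "\<lambda>v. (F has_derivative (\<lambda>h. inner v h)) (at p)"] der unfolding grad_def by blast
  have "(\<lambda>h. inner v h) = (\<lambda>h. inner (G p) h)" by (rule has_derivative_unique[OF v der])
  then have "inner (v - G p) (v - G p) = 0" by (metis inner_diff_left diff_self)
  then show "grad F p = G p" using vdef by simp
qed

lemma descent_lemma:
  fixes F :: "'a::real_inner \<Rightarrow> real"
  assumes up: "\<And>p q. F q \<le> F p + inner (G p) (q - p) + M / 2 * (norm (q - p))\<^sup>2" and M: "M > 0"
  shows "F (y - (1 / M) *\<^sub>R G y) \<le> F y - (norm (G y))\<^sup>2 / (2 * M)"
proof -
  have "F (y - (1 / M) *\<^sub>R G y)
      \<le> F y + inner (G y) (- ((1 / M) *\<^sub>R G y)) + M / 2 * (norm (- ((1 / M) *\<^sub>R G y)))\<^sup>2"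
    using up[where p = y and q = "y - (1 / M) *\<^sub>R G y"] by simp
  also have "(norm (- ((1 / M) *\<^sub>R G y)))\<^sup>2 = (norm (G y))\<^sup>2 / M\<^sup>2"
    using M by (simp add: power_divide)
  also have "inner (G y) (- ((1 / M) *\<^sub>R G y)) = - (norm (G y))\<^sup>2 / M"
    by (simp add: power2_norm_eq_inner)
  also have "F y + - (norm (G y))\<^sup>2 / M + M / 2 * ((norm (G y))\<^sup>2 / M\<^sup>2)
      = F y - (norm (G y))\<^sup>2 / (2 * M)"
    using M by (simp add: power2_eq_square field_simps)
  finally show ?thesis .
qed

text \<open>Co-coercivity of the gradient of a convex \<open>M\<close>-smooth function: apply the descent lemma to
  \<open>F - \<langle>G z, \<cdot>\<rangle>\<close>, which is minimised at \<open>z\<close>.\<close>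
lemma cocoercivity:
  fixes F :: "'a::real_inner \<Rightarrow> real"
  assumes lo: "\<And>p q. F p + inner (G p) (q - p) \<le> F q"
    and up: "\<And>p q. F q \<le> F p + inner (G p) (q - p) + M / 2 * (norm (q - p))\<^sup>2" and M: "M > 0"
  shows "(norm (G x - G z))\<^sup>2 \<le> 2 * M * (F x - F z - inner (G z) (x - z))"
proof -
  define \<phi> where "\<phi> w = F w - inner (G z) w" for w
  have up\<phi>: "\<phi> q \<le> \<phi> p + inner (G p - G z) (q - p) + M / 2 * (norm (q - p))\<^sup>2" for p q
    using up[where p = p and q = q] by (simp add: \<phi>_def inner_diff_left inner_diff_right)
  have "\<phi> z \<le> \<phi> (x - (1 / M) *\<^sub>R (G x - G z))"
    using lo[where p = z and q = "x - (1 / M) *\<^sub>R (G x - G z)"] unfolding \<phi>_def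
    by (simp add: inner_diff_right)
  also have "\<dots> \<le> \<phi> x - (norm (G x - G z))\<^sup>2 / (2 * M)"
    by (rule descent_lemma[where G = "\<lambda>p. G p - G z", OF up\<phi> M])
  finally have "(norm (G x - G z))\<^sup>2 / (2 * M) \<le> \<phi> x - \<phi> z" by simp
  then show ?thesis using M by (simp add: \<phi>_def inner_diff_right field_simps)
qed

lemma regularized_bounds:
  fixes F :: "'a::real_inner \<Rightarrow> real"
  assumes lo: "\<And>p q. F p + inner (G p) (q - p) \<le> F q"
    and up: "\<And>p q. F q \<le> F p + inner (G p) (q - p) + M / 2 * (norm (q - p))\<^sup>2"
  shows "F p + \<kappa> / 2 * (norm p)\<^sup>2 + inner (G p + \<kappa> *\<^sub>R p) (q - p) + \<kappa> / 2 * (norm (q - p))\<^sup>2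
      \<le> F q + \<kappa> / 2 * (norm q)\<^sup>2"
    and "F q + \<kappa> / 2 * (norm q)\<^sup>2
      \<le> F p + \<kappa> / 2 * (norm p)\<^sup>2 + inner (G p + \<kappa> *\<^sub>R p) (q - p) + (M + \<kappa>) / 2 * (norm (q - p))\<^sup>2"
proof -
  have slope: "inner (G p + \<kappa> *\<^sub>R p) (q - p) = inner (G p) (q - p) + \<kappa> * inner p (q - p)"
    by (simp add: inner_add_left)
  have "(M + \<kappa>) / 2 * (norm (q - p))\<^sup>2 = M / 2 * (norm (q - p))\<^sup>2 + \<kappa> / 2 * (norm (q - p))\<^sup>2"
    by (simp add: algebra_simps)
  then show "F p + \<kappa> / 2 * (norm p)\<^sup>2 + inner (G p + \<kappa> *\<^sub>R p) (q - p) + \<kappa> / 2 * (norm (q - p))\<^sup>2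
      \<le> F q + \<kappa> / 2 * (norm q)\<^sup>2"
    and "F q + \<kappa> / 2 * (norm q)\<^sup>2
      \<le> F p + \<kappa> / 2 * (norm p)\<^sup>2 + inner (G p + \<kappa> *\<^sub>R p) (q - p) + (M + \<kappa>) / 2 * (norm (q - p))\<^sup>2"
    using lo[where p = p and q = q] up[where p = p and q = q] half_sq_norm_expansion[of \<kappa> q p] slope
    by linarith+
qed

lemma strong_lower_imp_lower:
  fixes F :: "'a::real_inner \<Rightarrow> real"
  assumes lo: "\<And>p q. F p + inner (G p) (q - p) + \<kappa> / 2 * (norm (q - p))\<^sup>2 \<le> F q" and \<kappa>: "\<kappa> \<ge> 0"
  shows "F p + inner (G p) (q - p) \<le> F q"
proof -
  have "0 \<le> \<kappa> / 2 * (norm (q - p))\<^sup>2" using \<kappa> by simp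
  then show ?thesis using lo[where p = p and q = q] by linarith
qed

lemma regularized_gradient:
  fixes F :: "'a::real_inner \<Rightarrow> real"
  assumes lo: "\<And>p q. F p + inner (G p) (q - p) \<le> F q"
    and up: "\<And>p q. F q \<le> F p + inner (G p) (q - p) + M / 2 * (norm (q - p))\<^sup>2"
    and M: "M \<ge> 0" and \<kappa>: "\<kappa> \<ge> 0"
  shows "grad (\<lambda>p. F p + \<kappa> / 2 * (norm p)\<^sup>2) = (\<lambda>p. G p + \<kappa> *\<^sub>R p)"
proof
  have "F p + \<kappa> / 2 * (norm p)\<^sup>2 + inner (G p + \<kappa> *\<^sub>R p) (q - p) \<le> F q + \<kappa> / 2 * (norm q)\<^sup>2"
    for p q
    using strong_lower_imp_lower[where F = "\<lambda>p. F p + \<kappa> / 2 * (norm p)\<^sup>2"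
        and G = "\<lambda>p. G p + \<kappa> *\<^sub>R p", OF regularized_bounds(1)[OF lo up] \<kappa>]
    by simp
  then show "grad (\<lambda>p. F p + \<kappa> / 2 * (norm p)\<^sup>2) p = G p + \<kappa> *\<^sub>R p" for p
    using regularized_bounds(2)[OF lo up] M \<kappa>
    by (intro grad_of_quadratic_bounds(2)[where M = "M + \<kappa>"]) auto
qed

text \<open>A strongly convex smooth function on a finite-dimensional space has a stationary point, which
  is its global minimiser: it is continuous and coercive, so it attains its infimum on a ball,
  and a gradient step cannot decrease it there.\<close>
lemma strongly_convex_stationary_point:
  fixes F :: "'a::{real_inner, heine_borel} \<Rightarrow> real"
  assumes lo: "\<And>p q. F p + inner (G p) (q - p) + \<kappa> / 2 * (norm (q - p))\<^sup>2 \<le> F q"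
    and up: "\<And>p q. F q \<le> F p + inner (G p) (q - p) + M / 2 * (norm (q - p))\<^sup>2"
    and \<kappa>: "\<kappa> > 0" and M: "M > 0"
  shows "\<exists>y. G y = 0 \<and> (\<forall>q. F y \<le> F q)"
proof -
  have lo': "F p + inner (G p) (q - p) \<le> F q" for p q
    using strong_lower_imp_lower[OF lo] \<kappa> by simp
  define r where "r = 2 * norm (G 0) / \<kappa>"
  have cont: "continuous_on (cball 0 r) F"
    using grad_of_quadratic_bounds(1)[OF lo' up less_imp_le[OF M]]
    by (meson has_derivative_continuous continuous_at_imp_continuous_on)
  have "r \<ge> 0" using \<kappa> by (simp add: r_def)
  then obtain y where yB: "y \<in> cball 0 r" and ymin0: "\<And>z. z \<in> cball 0 r \<Longrightarrow> F y \<le> F z"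
    using continuous_attains_inf[OF compact_cball _ cont] by fastforce
  have ymin: "F y \<le> F z" for z
  proof (cases "z \<in> cball 0 r")
    case False
    then have "2 * norm (G 0) < \<kappa> * norm z" using \<kappa> by (simp add: r_def field_simps)
    then have "norm (G 0) * norm z \<le> \<kappa> / 2 * (norm z)\<^sup>2"
      using mult_right_mono[of "2 * norm (G 0)" "\<kappa> * norm z" "norm z"]
      by (simp add: power2_eq_square mult.assoc)
    moreover have "- (norm (G 0) * norm z) \<le> inner (G 0) z"
      using Cauchy_Schwarz_ineq2[of "G 0" z] by (simp add: abs_le_iff)
    ultimately have "F 0 \<le> F z" using lo[where p = 0 and q = z] by simp
    then show ?thesis using ymin0[of 0] \<open>r \<ge> 0\<close> by simp
  qed (rule ymin0)
  have "F y \<le> F y - (norm (G y))\<^sup>2 / (2 * M)"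
    using ymin descent_lemma[OF up M, of y] by (meson order_trans)
  then have "G y = 0" using M by (simp add: divide_le_0_iff)
  with ymin show ?thesis by blast
qed

text \<open>The algebraic core of the one-step potential decrease of the fast gradient method, in terms
  of the real numbers produced by the three inequalities used (descent step, lower bound at the
  previous iterate, lower bound at the comparison point) and the Gram entries of \<open>a, b, g\<close>.\<close>
lemma fgm_potential_algebra:
  fixes Fx' Fx Fy Fu aa bb gg ab ag bg Q L \<kappa> :: real
  assumes k: "\<kappa> > 0" and Q: "0 \<le> Q" "Q \<le> 1" and QL: "Q\<^sup>2 * L = \<kappa>"
    and descent: "Fx' \<le> Fy - gg / (2 * L)" and prev: "Fy + Q * (bg - ag) \<le> Fx"
    and comp: "Fy - bg + \<kappa> / 2 * bb \<le> Fu" and gram: "0 \<le> aa + bb - 2 * ab"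
  shows "Fx' - Fu + \<kappa> / 2 * ((1-Q)\<^sup>2*aa + Q\<^sup>2*bb + (Q/\<kappa>)\<^sup>2*gg + 2*(1-Q)*Q*ab
      - 2*(1-Q)*(Q/\<kappa>)*ag - 2*Q*(Q/\<kappa>)*bg)
     \<le> (1-Q) * (Fx - Fu + \<kappa> / 2 * aa)"
proof -
  have Q0: "Q \<noteq> 0" using QL k by auto
  have L: "gg / (2 * L) = \<kappa> / 2 * ((Q/\<kappa>)\<^sup>2*gg)"
    using QL k Q0 by (auto simp: field_simps power2_eq_square)
  define s1 where "s1 = Fy - gg / (2 * L) - Fx'"
  define s2 where "s2 = Fx - Fy - Q * (bg - ag)"
  define s3 where "s3 = Fu - Fy + bg - \<kappa> / 2 * bb"
  have "(1-Q) * (Fx - Fu + \<kappa> / 2 * aa) - (Fx' - Fu + \<kappa> / 2 * ((1-Q)\<^sup>2*aa + Q\<^sup>2*bb + (Q/\<kappa>)\<^sup>2*gg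
      + 2*(1-Q)*Q*ab - 2*(1-Q)*(Q/\<kappa>)*ag - 2*Q*(Q/\<kappa>)*bg))
     = s1 + (1-Q) * s2 + Q * s3 + Q * (1-Q) * \<kappa> / 2 * (aa + bb - 2 * ab)"
    unfolding s1_def s2_def s3_def L using k by (simp add: field_simps power2_eq_square)
  moreover have "0 \<le> s1 + (1-Q) * s2 + Q * s3 + Q * (1-Q) * \<kappa> / 2 * (aa + bb - 2 * ab)"
    using descent prev comp gram Q k
    by (intro add_nonneg_nonneg mult_nonneg_nonneg) (auto simp: s1_def s2_def s3_def)
  ultimately show ?thesis by linarith
qed

locale fgm_setting =
  fixes F :: "'a::real_inner \<Rightarrow> real" and G :: "'a \<Rightarrow> 'a" and \<kappa> L :: real
  assumes \<kappa>_pos: "\<kappa> > 0" and \<kappa>_le_L: "\<kappa> \<le> L"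
    and lower: "\<And>p q. F p + inner (G p) (q - p) + \<kappa> / 2 * (norm (q - p))\<^sup>2 \<le> F q"
    and upper: "\<And>p q. F q \<le> F p + inner (G p) (q - p) + L / 2 * (norm (q - p))\<^sup>2"
begin

definition Q :: real where "Q = sqrt (\<kappa> / L)"
definition iter_p :: "nat \<Rightarrow> 'a" where "iter_p k = fst (fgm G L \<kappa> k)"
definition iter_w :: "nat \<Rightarrow> 'a" where "iter_w k = snd (fgm G L \<kappa> k)"

text \<open>The centre of the estimate sequence, recovered from the two iterates.\<close>
definition centre :: "nat \<Rightarrow> 'a" where
  "centre k = (1 / Q) *\<^sub>R ((1 + Q) *\<^sub>R iter_w k - iter_p k)"

definition potential :: "'a \<Rightarrow> nat \<Rightarrow> real" where
  "potential u k = F (iter_p k) - F u + \<kappa> / 2 * (norm (centre k - u))\<^sup>2"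

lemma L_pos: "L > 0" using \<kappa>_pos \<kappa>_le_L by simp

lemma Q_pos: "Q > 0" and Q_le_1: "Q \<le> 1" and Q_sq_L: "Q\<^sup>2 * L = \<kappa>"
  using \<kappa>_pos \<kappa>_le_L L_pos by (auto simp: Q_def)

lemma momentum_coefficient: "(sqrt L - sqrt \<kappa>) / (sqrt L + sqrt \<kappa>) = (1 - Q) / (1 + Q)"
proof -
  have sL: "sqrt L > 0" using L_pos by simp
  have "sqrt \<kappa> = sqrt L * Q" using sL by (simp add: Q_def real_sqrt_divide)
  then have "(sqrt L - sqrt \<kappa>) / (sqrt L + sqrt \<kappa>) = (sqrt L * (1 - Q)) / (sqrt L * (1 + Q))"
    by (simp add: algebra_simps)
  also have "\<dots> = (1 - Q) / (1 + Q)" using sL by simp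
  finally show ?thesis .
qed

lemma iter_p_Suc: "iter_p (Suc k) = iter_w k - (1 / L) *\<^sub>R G (iter_w k)"
  by (simp add: iter_p_def iter_w_def Let_def)

lemma iter_w_Suc:
  "iter_w (Suc k) = iter_p (Suc k) + ((1 - Q) / (1 + Q)) *\<^sub>R (iter_p (Suc k) - iter_p k)"
  by (simp add: iter_p_def iter_w_def Let_def momentum_coefficient)

lemma Q_centre: "Q *\<^sub>R centre k = (1 + Q) *\<^sub>R iter_w k - iter_p k"
  using Q_pos by (simp add: centre_def)

lemma iter_p_minus_w: "iter_p k - iter_w k = Q *\<^sub>R (iter_w k - centre k)"
  using Q_centre[of k] by (simp add: algebra_simps)

lemma centre_Suc:
  "centre (Suc k) = Q *\<^sub>R iter_w k - (Q / \<kappa>) *\<^sub>R G (iter_w k) + (1 - Q) *\<^sub>R centre k"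
proof -
  have "(1 + Q) *\<^sub>R iter_w (Suc k) = (1 + Q) *\<^sub>R iter_p (Suc k)
      + ((1 + Q) * ((1 - Q) / (1 + Q))) *\<^sub>R (iter_p (Suc k) - iter_p k)"
    by (simp add: iter_w_Suc scaleR_add_right)
  also have "(1 + Q) * ((1 - Q) / (1 + Q)) = 1 - Q" using Q_pos by simp
  finally have "(1 + Q) *\<^sub>R iter_w (Suc k) - iter_p (Suc k) = iter_p (Suc k) - (1 - Q) *\<^sub>R iter_p k"
    by (simp add: algebra_simps)
  then have "Q *\<^sub>R centre (Suc k) = iter_p (Suc k) - (1 - Q) *\<^sub>R iter_p k"
    by (simp add: Q_centre)
  also have "\<dots> = iter_w k - (1 / L) *\<^sub>R G (iter_w k)
      - (1 - Q) *\<^sub>R ((1 + Q) *\<^sub>R iter_w k - Q *\<^sub>R centre k)"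
    by (simp add: iter_p_Suc Q_centre)
  also have "\<dots> = Q *\<^sub>R (Q *\<^sub>R iter_w k - (Q / \<kappa>) *\<^sub>R G (iter_w k) + (1 - Q) *\<^sub>R centre k)"
  proof -
    have "1 / L = Q * (Q / \<kappa>)" using Q_sq_L \<kappa>_pos L_pos by (simp add: field_simps power2_eq_square)
    then show ?thesis by (simp add: algebra_simps)
  qed
  finally show ?thesis using Q_pos by simp
qed

lemma potential_step: "potential u (Suc k) \<le> (1 - Q) * potential u k"
proof -
  define y where "y = iter_w k"
  define g where "g = G y"
  define a where "a = centre k - u"
  define b where "b = y - u"
  have centre_u: "centre (Suc k) - u = (1 - Q) *\<^sub>R a + Q *\<^sub>R b - (Q / \<kappa>) *\<^sub>R g"
    by (simp add: centre_Suc a_def b_def g_def y_def algebra_simps)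
  have N: "(norm (centre (Suc k) - u))\<^sup>2 = (1-Q)\<^sup>2*inner a a + Q\<^sup>2*inner b b + (Q/\<kappa>)\<^sup>2*inner g g
      + 2*(1-Q)*Q*inner a b - 2*(1-Q)*(Q/\<kappa>)*inner a g - 2*Q*(Q/\<kappa>)*inner b g"
    unfolding centre_u power2_norm_eq_inner
    by (simp add: inner_add_left inner_add_right inner_diff_left inner_diff_right inner_commute[of b a]
        inner_commute[of g a] inner_commute[of g b] algebra_simps power2_eq_square)
  have gram: "0 \<le> inner a a + inner b b - 2 * inner a b"
    using inner_ge_zero[of "a - b"] by (simp add: inner_diff_left inner_diff_right inner_commute[of b a])
  have descent: "F (iter_p (Suc k)) \<le> F y - inner g g / (2 * L)"
    using descent_lemma[OF upper L_pos, of y] by (simp add: iter_p_Suc y_def g_def power2_norm_eq_inner)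
  have prev: "F y + Q * (inner b g - inner a g) \<le> F (iter_p k)"
  proof -
    have "0 \<le> \<kappa> / 2 * (norm (iter_p k - y))\<^sup>2" using \<kappa>_pos by simp
    then have "F y + inner g (iter_p k - y) \<le> F (iter_p k)"
      using lower[where p = y and q = "iter_p k"] unfolding g_def by linarith
    moreover have "iter_p k - y = Q *\<^sub>R (b - a)" by (simp add: iter_p_minus_w a_def b_def y_def)
    ultimately show ?thesis by (simp add: inner_diff_right inner_commute[of g])
  qed
  have comp: "F y - inner b g + \<kappa> / 2 * inner b b \<le> F u"
  proof -
    have "u - y = - b" by (simp add: b_def)
    then show ?thesis using lower[where p = y and q = u]
      by (simp add: g_def power2_norm_eq_inner inner_commute[of "G y" b])
  qed
  have "F (iter_p (Suc k)) - F u + \<kappa> / 2 * (norm (centre (Suc k) - u))\<^sup>2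
      \<le> (1 - Q) * (F (iter_p k) - F u + \<kappa> / 2 * inner a a)"
    unfolding N
    by (rule fgm_potential_algebra[OF \<kappa>_pos less_imp_le[OF Q_pos] Q_le_1 Q_sq_L descent prev comp gram])
  then show ?thesis by (simp add: potential_def a_def power2_norm_eq_inner)
qed

theorem fgm_rate: "F (iter_p k) - F u \<le> (1 - Q) ^ k * (F 0 - F u + \<kappa> / 2 * (norm u)\<^sup>2)"
proof -
  have "potential u k \<le> (1 - Q) ^ k * potential u 0"
  proof (induction k)
    case (Suc k)
    have "potential u (Suc k) \<le> (1 - Q) * potential u k" by (rule potential_step)
    also have "\<dots> \<le> (1 - Q) * ((1 - Q) ^ k * potential u 0)"
      using Suc Q_le_1 by (intro mult_left_mono) auto
    finally show ?case by simp
  qed simp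
  moreover have "F (iter_p k) - F u \<le> potential u k" using \<kappa>_pos by (simp add: potential_def)
  moreover have "potential u 0 = F 0 - F u + \<kappa> / 2 * (norm u)\<^sup>2"
    by (simp add: potential_def iter_p_def centre_def iter_w_def)
  ultimately show ?thesis by simp
qed

end

lemma adjoint_diff:
  assumes adj: "\<And>p x. inner (Astar p) x = inner p (A x)"
  shows "Astar q - Astar p = Astar (q - p)"
proof -
  have "inner (Astar q - Astar p - Astar (q - p)) x = 0" for x
    by (simp add: inner_diff_left adj)
  from this[of "Astar q - Astar p - Astar (q - p)"] show ?thesis by simp
qed

lemma adjoint_norm_le:
  assumes A: "bounded_linear A" and adj: "\<And>p x. inner (Astar p) x = inner p (A x)"
  shows "norm (Astar v) \<le> onorm A * norm v"
proof (cases "Astar v = 0")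
  case True then show ?thesis using onorm_pos_le[OF A] by simp
next
  case False
  have "norm (Astar v) * norm (Astar v) = inner v (A (Astar v))"
    by (simp flip: adj add: power2_norm_eq_inner[symmetric] power2_eq_square)
  also have "\<dots> \<le> norm v * norm (A (Astar v))" by (rule norm_cauchy_schwarz)
  also have "\<dots> \<le> norm v * (onorm A * norm (Astar v))" by (intro mult_left_mono onorm[OF A]) auto
  finally show ?thesis using False by (simp add: mult.commute mult.left_commute)
qed

lemma dual_function_smooth:
  fixes f :: "'a::{real_inner, complete_space} \<Rightarrow> ereal"
    and g :: "'b::{real_inner, complete_space} \<Rightarrow> ereal" and \<theta> :: "'b \<Rightarrow> real"
  assumes f: "sc_lsc f \<rho>" and g: "sc_lsc g \<mu>" and A: "bounded_linear A"
    and adj: "\<And>p x. inner (Astar p) x = inner p (A x)"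
    and \<theta>_def: "\<And>p. ereal (\<theta> p) = fconj f (Astar p) + fconj g (- p)"
  shows "\<exists>G. (\<forall>p q. \<theta> p + inner (G p) (q - p) \<le> \<theta> q) \<and>
    (\<forall>p q. \<theta> q \<le> \<theta> p + inner (G p) (q - p) + ((onorm A)\<^sup>2 / \<rho> + 1 / \<mu>) / 2 * (norm (q - p))\<^sup>2)"
proof -
  interpret f: sc_lsc f \<rho> by (rule f)
  interpret g: sc_lsc g \<mu> by (rule g)
  have \<theta>: "\<theta> p = f.conj_val (Astar p) + g.conj_val (- p)" for p
    using \<theta>_def[of p] by (simp add: f.fconj_eq g.fconj_eq)
  define G where "G p = A (f.argmax (Astar p)) - g.argmax (- p)" for p
  have slope: "inner (G p) (q - p) = inner (Astar (q - p)) (f.argmax (Astar p)) + inner (- q - - p) (g.argmax (- p))"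
    for p q by (simp add: G_def adj inner_diff_left inner_diff_right inner_commute)
  have "\<theta> p + inner (G p) (q - p) \<le> \<theta> q" for p q
    using f.conj_lower[of "Astar p" "Astar q"] g.conj_lower[of "- p" "- q"]
    by (simp add: \<theta> slope adjoint_diff[OF adj])
  moreover have "\<theta> q \<le> \<theta> p + inner (G p) (q - p) + ((onorm A)\<^sup>2 / \<rho> + 1 / \<mu>) / 2 * (norm (q - p))\<^sup>2"
    for p q
  proof -
    have "(norm (Astar (q - p)))\<^sup>2 / (2 * \<rho>) \<le> (onorm A)\<^sup>2 * (norm (q - p))\<^sup>2 / (2 * \<rho>)"
      using adjoint_norm_le[OF A adj, of "q - p"] f.c_pos
      by (intro divide_right_mono) (auto simp: power_mult_distrib[symmetric] intro!: power_mono)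
    moreover have "((onorm A)\<^sup>2 / \<rho> + 1 / \<mu>) / 2 * (norm (q - p))\<^sup>2
        = (onorm A)\<^sup>2 * (norm (q - p))\<^sup>2 / (2 * \<rho>) + (norm (- q - - p))\<^sup>2 / (2 * \<mu>)"
      by (simp add: field_simps norm_minus_commute)
    moreover have "f.conj_val (Astar q) \<le> f.conj_val (Astar p)
        + inner (Astar (q - p)) (f.argmax (Astar p)) + (norm (Astar (q - p)))\<^sup>2 / (2 * \<rho>)"
      using f.conj_upper[where y = "Astar p" and y' = "Astar q"] by (simp add: adjoint_diff[OF adj])
    moreover have "g.conj_val (- q) \<le> g.conj_val (- p)
        + inner (- q - - p) (g.argmax (- p)) + (norm (- q - - p))\<^sup>2 / (2 * \<mu>)"
      by (rule g.conj_upper)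
    ultimately show ?thesis unfolding \<theta> slope by linarith
  qed
  ultimately show ?thesis by blast
qed

lemma one_minus_pow_le_exp:
  fixes q :: real
  assumes "0 \<le> q" "q \<le> 1"
  shows "(1 - q) ^ k \<le> (exp (- (real k / 2) * q))\<^sup>2"
proof -
  have "(1 - q) ^ k \<le> exp (- q) ^ k"
    using assms exp_ge_add_one_self[of "- q"] by (intro power_mono) auto
  also have "\<dots> = (exp (- (real k / 2) * q))\<^sup>2"
    by (simp add: exp_of_nat_mult[symmetric] power2_eq_square exp_add[symmetric] field_simps)
  finally show ?thesis .
qed

lemma regularized_fgm_rate:
  fixes \<theta> :: "'a::real_inner \<Rightarrow> real" and k :: nat
  assumes lo: "\<And>p q. \<theta> p + inner (G p) (q - p) \<le> \<theta> q"
    and up: "\<And>p q. \<theta> q \<le> \<theta> p + inner (G p) (q - p) + M / 2 * (norm (q - p))\<^sup>2"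
    and M: "M > 0" and \<kappa>: "\<kappa> > 0" and u: "\<theta> u \<le> \<theta> 0"
  defines "pk \<equiv> fst (fgm (\<lambda>p. G p + \<kappa> *\<^sub>R p) (M + \<kappa>) \<kappa> k)"
  shows "\<theta> pk + \<kappa> / 2 * (norm pk)\<^sup>2 - (\<theta> u + \<kappa> / 2 * (norm u)\<^sup>2)
    \<le> (exp (- (real k / 2) * sqrt (\<kappa> / (M + \<kappa>))))\<^sup>2 * (\<theta> 0 - \<theta> u)"
proof -
  interpret fgm_setting "\<lambda>p. \<theta> p + \<kappa> / 2 * (norm p)\<^sup>2" "\<lambda>p. G p + \<kappa> *\<^sub>R p" \<kappa> "M + \<kappa>"
    using regularized_bounds[OF lo up] M \<kappa> by unfold_locales auto
  have "\<theta> pk + \<kappa> / 2 * (norm pk)\<^sup>2 - (\<theta> u + \<kappa> / 2 * (norm u)\<^sup>2) \<le> (1 - Q) ^ k * (\<theta> 0 - \<theta> u)"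
    using fgm_rate[of k u] by (simp add: pk_def iter_p_def)
  also have "\<dots> \<le> (exp (- (real k / 2) * sqrt (\<kappa> / (M + \<kappa>))))\<^sup>2 * (\<theta> 0 - \<theta> u)"
    using one_minus_pow_le_exp[OF less_imp_le[OF Q_pos] Q_le_1] u
    by (intro mult_right_mono) (auto simp: Q_def)
  finally show ?thesis .
qed

text \<open>Suboptimality of the iterates for the original function: the regularisation costs at most
  \<open>\<kappa>/2 \<parallel>p\<^sup>*\<parallel>\<^sup>2\<close>.\<close>
lemma regularized_fgm_value_bound:
  fixes \<theta> :: "'a::real_inner \<Rightarrow> real" and k :: nat
  assumes lo: "\<And>p q. \<theta> p + inner (G p) (q - p) \<le> \<theta> q"
    and up: "\<And>p q. \<theta> q \<le> \<theta> p + inner (G p) (q - p) + M / 2 * (norm (q - p))\<^sup>2"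
    and M: "M > 0" and \<kappa>: "\<kappa> > 0"
    and opt: "\<And>p. \<theta> pstar \<le> \<theta> p" and R: "norm pstar \<le> R"
  defines "pk \<equiv> fst (fgm (\<lambda>p. G p + \<kappa> *\<^sub>R p) (M + \<kappa>) \<kappa> k)"
  shows "\<theta> pk - \<theta> pstar \<le> \<kappa> / 2 * R\<^sup>2
    + 25 / 8 * (\<theta> 0 - \<theta> pstar) * exp (- (real k / 2) * sqrt (\<kappa> / (M + \<kappa>)))"
proof -
  define E where "E = exp (- (real k / 2) * sqrt (\<kappa> / (M + \<kappa>)))"
  have E: "0 \<le> E" "E \<le> 1" using M \<kappa> by (auto simp: E_def)
  have D: "0 \<le> \<theta> 0 - \<theta> pstar" using opt[of 0] by simp
  have "0 \<le> \<kappa> / 2 * (norm pk)\<^sup>2" using \<kappa> by simp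
  then have "\<theta> pk - \<theta> pstar \<le> E\<^sup>2 * (\<theta> 0 - \<theta> pstar) + \<kappa> / 2 * (norm pstar)\<^sup>2"
    using regularized_fgm_rate[OF lo up M \<kappa> opt[of 0], of k] unfolding pk_def E_def by linarith
  also have "E\<^sup>2 * (\<theta> 0 - \<theta> pstar) \<le> 25 / 8 * E * (\<theta> 0 - \<theta> pstar)"
  proof (rule mult_right_mono[OF _ D])
    have "E * E \<le> 1 * E" by (rule mult_right_mono[OF E(2) E(1)])
    then show "E\<^sup>2 \<le> 25 / 8 * E" using E by (simp add: power2_eq_square)
  qed
  also have "\<dots> = 25 / 8 * (\<theta> 0 - \<theta> pstar) * E" by simp
  also have "\<kappa> / 2 * (norm pstar)\<^sup>2 \<le> \<kappa> / 2 * R\<^sup>2"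
    using R \<kappa> by (intro mult_left_mono power_mono) auto
  finally show ?thesis by (simp add: E_def)
qed

text \<open>The minimiser \<open>y\<close> of the regularisation \<open>\<theta> + \<kappa>/2 \<parallel>\<cdot>\<parallel>\<^sup>2\<close> satisfies \<open>G y = -\<kappa> y\<close> and, since
  \<open>\<theta> p\<^sup>* \<le> \<theta> y\<close>, is no longer than \<open>p\<^sup>*\<close>.\<close>
lemma regularized_minimiser:
  fixes \<theta> :: "'a::{real_inner, heine_borel} \<Rightarrow> real"
  assumes lo: "\<And>p q. \<theta> p + inner (G p) (q - p) \<le> \<theta> q"
    and up: "\<And>p q. \<theta> q \<le> \<theta> p + inner (G p) (q - p) + M / 2 * (norm (q - p))\<^sup>2"
    and M: "M > 0" and \<kappa>: "\<kappa> > 0" and opt: "\<And>p. \<theta> pstar \<le> \<theta> p"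
  obtains y where "G y = - (\<kappa> *\<^sub>R y)" and "norm y \<le> norm pstar"
    and "\<And>q. \<theta> y + \<kappa> / 2 * (norm y)\<^sup>2 \<le> \<theta> q + \<kappa> / 2 * (norm q)\<^sup>2"
proof -
  obtain y where Gy: "G y + \<kappa> *\<^sub>R y = 0"
    and ymin: "\<And>q. \<theta> y + \<kappa> / 2 * (norm y)\<^sup>2 \<le> \<theta> q + \<kappa> / 2 * (norm q)\<^sup>2"
    using strongly_convex_stationary_point[where F = "\<lambda>p. \<theta> p + \<kappa> / 2 * (norm p)\<^sup>2"
        and G = "\<lambda>p. G p + \<kappa> *\<^sub>R p" and M = "M + \<kappa>", OF regularized_bounds[OF lo up]] M \<kappa>
    by auto
  have "\<kappa> / 2 * (norm y)\<^sup>2 \<le> \<kappa> / 2 * (norm pstar)\<^sup>2" using ymin[of pstar] opt[of y] by linarith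
  then have "norm y \<le> norm pstar" using \<kappa> by (simp add: power2_le_iff_abs_le)
  moreover have "G y = - (\<kappa> *\<^sub>R y)" using Gy by (simp add: eq_neg_iff_add_eq_0)
  ultimately show thesis using that ymin by blast
qed

text \<open>Gradient norm of the iterates for the original function: compare with the minimiser \<open>y\<close> of
  the regularised function, where \<open>G y = -\<kappa> y\<close> and \<open>\<parallel>y\<parallel> \<le> \<parallel>p\<^sup>*\<parallel>\<close>, via co-coercivity of \<open>G\<close>.\<close>
lemma regularized_fgm_gradient_bound:
  fixes \<theta> :: "'a::{real_inner, heine_borel} \<Rightarrow> real" and k :: nat
  assumes lo: "\<And>p q. \<theta> p + inner (G p) (q - p) \<le> \<theta> q"
    and up: "\<And>p q. \<theta> q \<le> \<theta> p + inner (G p) (q - p) + M / 2 * (norm (q - p))\<^sup>2"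
    and M: "M > 0" and \<kappa>: "\<kappa> > 0"
    and opt: "\<And>p. \<theta> pstar \<le> \<theta> p" and R: "norm pstar \<le> R"
  defines "pk \<equiv> fst (fgm (\<lambda>p. G p + \<kappa> *\<^sub>R p) (M + \<kappa>) \<kappa> k)"
  shows "norm (G pk) \<le> 2 * sqrt ((M + \<kappa>) * (\<theta> 0 - \<theta> pstar)) * exp (- (real k / 2) * sqrt (\<kappa> / (M + \<kappa>)))
    + 2 * \<kappa> * R"
proof -
  define E where "E = exp (- (real k / 2) * sqrt (\<kappa> / (M + \<kappa>)))"
  define D where "D = \<theta> 0 - \<theta> pstar"
  have E: "0 \<le> E" by (simp add: E_def)
  have D: "0 \<le> D" using opt[of 0] by (simp add: D_def)
  obtain y where Gy: "G y = - (\<kappa> *\<^sub>R y)" and y_norm: "norm y \<le> norm pstar"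
    and ymin: "\<And>q. \<theta> y + \<kappa> / 2 * (norm y)\<^sup>2 \<le> \<theta> q + \<kappa> / 2 * (norm q)\<^sup>2"
    using regularized_minimiser[OF lo up M \<kappa> opt] by blast
  have Gy_norm: "norm (G y) \<le> \<kappa> * R" using Gy y_norm R \<kappa> by simp
  have "0 \<le> \<kappa> / 2 * (norm y)\<^sup>2" using \<kappa> by simp
  then have "\<theta> y \<le> \<theta> 0" using ymin[of 0] by simp
  then have rate: "\<theta> pk + \<kappa> / 2 * (norm pk)\<^sup>2 - (\<theta> y + \<kappa> / 2 * (norm y)\<^sup>2) \<le> E\<^sup>2 * (\<theta> 0 - \<theta> y)"
    unfolding pk_def E_def by (rule regularized_fgm_rate[OF lo up M \<kappa>])
  have "\<theta> pk - \<theta> y - inner (G y) (pk - y)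
      = \<theta> pk + \<kappa> / 2 * (norm pk)\<^sup>2 - (\<theta> y + \<kappa> / 2 * (norm y)\<^sup>2) - \<kappa> / 2 * (norm (pk - y))\<^sup>2"
  proof -
    have "inner (G y) (pk - y) = - (\<kappa> * inner y (pk - y))" by (simp add: Gy)
    then show ?thesis using half_sq_norm_expansion[of \<kappa> pk y] by linarith
  qed
  also have "\<dots> \<le> E\<^sup>2 * (\<theta> 0 - \<theta> y)"
  proof -
    have "0 \<le> \<kappa> / 2 * (norm (pk - y))\<^sup>2" using \<kappa> by simp
    then show ?thesis using rate by linarith
  qed
  also have "\<dots> \<le> E\<^sup>2 * D" using opt[of y] by (simp add: D_def mult_left_mono)
  finally have gap: "\<theta> pk - \<theta> y - inner (G y) (pk - y) \<le> E\<^sup>2 * D" .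
  have "(norm (G pk - G y))\<^sup>2 \<le> 2 * M * (\<theta> pk - \<theta> y - inner (G y) (pk - y))"
    by (rule cocoercivity[OF lo up M])
  also have "\<dots> \<le> 4 * (M + \<kappa>) * (E\<^sup>2 * D)"
    using gap lo[where p = y and q = pk] M \<kappa> D by (intro mult_mono) auto
  also have "\<dots> = (2 * sqrt ((M + \<kappa>) * D) * E)\<^sup>2"
    using M \<kappa> D by (simp add: power_mult_distrib)
  finally have "(norm (G pk - G y))\<^sup>2 \<le> (2 * sqrt ((M + \<kappa>) * D) * E)\<^sup>2" .
  moreover have "0 \<le> 2 * sqrt ((M + \<kappa>) * D) * E" using E M \<kappa> D by simp
  ultimately have "norm (G pk - G y) \<le> 2 * sqrt ((M + \<kappa>) * D) * E" by (rule power2_le_imp_le)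
  moreover have "norm (G pk) \<le> norm (G pk - G y) + norm (G y)"
    using norm_triangle_sub[of "G pk" "G y"] by simp
  moreover have "0 \<le> \<kappa> * R" using Gy_norm norm_ge_zero order_trans by blast
  ultimately show ?thesis using Gy_norm unfolding E_def D_def by linarith
qed

theorem mainTheorem8:
  fixes f :: "'a::{real_inner, complete_space} \<Rightarrow> ereal"
    and g :: "'b::euclidean_space \<Rightarrow> ereal"
    and A :: "'a \<Rightarrow> 'b" and Astar :: "'b \<Rightarrow> 'a"
    and \<rho> \<mu> R \<kappa> :: real and pstar :: 'b
    and \<theta> :: "'b \<Rightarrow> real" and L :: "real \<Rightarrow> real"
  assumes f_proper: "proper_fun f" and f_convex: "convex_fun f" and f_lsc: "lsc_fun f"
    and f_bdd: "bounded (edom f)"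
    and g_proper: "proper_fun g" and g_lsc: "lsc_fun g"
    and \<mu>_pos: "\<mu> > 0" and g_sc: "strongly_convex_fun \<mu> g"
    and A_lin: "bounded_linear A"
    and adj: "\<And>p x. inner (Astar p) x = inner p (A x)"
    and dom_meet: "A ` edom f \<inter> edom g \<noteq> {}"
    and \<rho>_pos: "\<rho> > 0" and f_sc: "strongly_convex_fun \<rho> f"
    and \<theta>_def: "\<And>p. ereal (\<theta> p) = fconj f (Astar p) + fconj g (- p)"
    and L_def: "\<And>c. L c = (onorm A)\<^sup>2 / \<rho> + 1 / \<mu> + c"
    and pstar_opt: "\<And>p. \<theta> pstar \<le> \<theta> p"
    and R_pos: "R > 0" and pstar_R: "norm pstar \<le> R"
    and \<kappa>_pos: "\<kappa> > 0"
  shows "\<forall>k. let pk = fst (fgm (grad (\<lambda>p. \<theta> p + \<kappa> / 2 * (norm p)\<^sup>2)) (L \<kappa>) \<kappa> k) in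
      \<theta> pk - \<theta> pstar \<le> \<kappa> / 2 * R\<^sup>2
        + 25 / 8 * (\<theta> 0 - \<theta> pstar) * exp (- (real k / 2) * sqrt (\<kappa> / L \<kappa>))
    \<and> norm (grad \<theta> pk) \<le> 2 * sqrt (L \<kappa> * (\<theta> 0 - \<theta> pstar)) * exp (- (real k / 2) * sqrt (\<kappa> / L \<kappa>))
        + 2 * \<kappa> * R"
proof -
  define M where "M = (onorm A)\<^sup>2 / \<rho> + 1 / \<mu>"
  have M: "M > 0" using \<rho>_pos \<mu>_pos by (simp add: M_def add_nonneg_pos)
  have L: "L \<kappa> = M + \<kappa>" by (simp add: L_def M_def)
  have "sc_lsc f \<rho>" "sc_lsc g \<mu>"
    using f_proper f_lsc f_sc \<rho>_pos g_proper g_lsc g_sc \<mu>_pos by (simp_all add: sc_lsc_def)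
  then obtain G where lo: "\<And>p q. \<theta> p + inner (G p) (q - p) \<le> \<theta> q"
    and up: "\<And>p q. \<theta> q \<le> \<theta> p + inner (G p) (q - p) + M / 2 * (norm (q - p))\<^sup>2"
    using dual_function_smooth[OF _ _ A_lin adj \<theta>_def] unfolding M_def by blast
  have grad_\<theta>: "grad \<theta> = G"
    using grad_of_quadratic_bounds(2)[OF lo up less_imp_le[OF M]] by blast
  have grad_reg: "grad (\<lambda>p. \<theta> p + \<kappa> / 2 * (norm p)\<^sup>2) = (\<lambda>p. G p + \<kappa> *\<^sub>R p)"
    using regularized_gradient[OF lo up] M \<kappa>_pos by simp
  show ?thesis
    unfolding Let_def grad_\<theta> grad_reg L
    by (intro allI conjI regularized_fgm_value_bound[OF lo up M \<kappa>_pos pstar_opt pstar_R]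
        regularized_fgm_gradient_bound[OF lo up M \<kappa>_pos pstar_opt pstar_R])
qed

end
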